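(* Let $c_1,c_2\in\mathbb N$ be absolute constants such that $e(c_1m,{\rm APP}_{\infty,d};\Lambda^{\rm std})\le c_2\,e(m,{\rm APP}_{\infty,d};\Lambda^{\rm all})$ for all $d,m\in\mathbb N$ and all admissible weight functions $\omega$ (such constants exist). Then for $\star\in\{{\rm ABS},{\rm NOR}\}$, all $d\in\mathbb N$ and all $\varepsilon\in(0,1)$, $$ n^\star(\varepsilon,d;\Lambda^{\rm std})\le 2c_1\, n^\star\big(\varepsilon/c_2,d;\Lambda^{\rm all}\big).$$
   Context: $\mathbb T^d=[0,1]^d$ is the torus with Lebesgue measure; $\hat f(\mathbf k)=\int_{\mathbb T^d}f(\mathbf x)e^{-2\pi i\mathbf k\cdot\mathbf x}d\mathbf x$. For each $d$ an admissible weight is a function $\omega:\mathbb Z^d\to(0,\infty)$ with $\sum_{\mathbf k}\omega(\mathbf k)^{-2}<\infty$; $H^\omega(\mathbb T^d)$ is the Hilbert space of $f\in L_2(\mathbb T^d)$ with $\|f\|^2=\sum_{\mathbf k}|\hat f(\mathbf k)|^2\omega(\mathbf k)^2<\infty$, a reproducing kernel Hilbert space of continuous functions. ${\rm APP}_{\infty,d}:H^\omega(\mathbb T^d)\to L_\infty(\mathbb T^d)$ (sup norm), $f\mapsto f$. $\Lambda^{\rm all}$: all continuous linear functionals; $\Lambda^{\rm std}$: point evaluations. $e(n,{\rm APP}_{\infty,d};\Lambda)$ is the infimum over algorithms $A(f)=\phi(L_1f,\dots,L_nf)$, $L_i\in\Lambda$, $\phi$ arbitrary, of $\sup_{\|f\|\le1}\|f-A(f)\|_\infty$;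 for $n=0$, $A=0$ and $e(0,{\rm APP}_{\infty,d})=\sup_{\|f\|\le1}\|f\|_\infty=(\sum_k\lambda_{k,d})^{1/2}$, where $\lambda_{k,d}$ is the nonincreasing rearrangement of $\omega(\mathbf k)^{-2}$. Information complexity: $n^\star(\varepsilon,d;\Lambda)=\inf\{n\ge0: e(n,{\rm APP}_{\infty,d};\Lambda)\le\varepsilon\,{\rm CRI}_d\}$ with ${\rm CRI}_d=1$ for $\star={\rm ABS}$ and ${\rm CRI}_d=e(0,{\rm APP}_{\infty,d})$ for $\star={\rm NOR}$. *)

theory Defs
  imports "HOL-Analysis.Analysis" "HOL-Probability.Essential_Supremum"
begin

text \<open>Frequencies in Z^d: extensional functions on {..<d}. Points of the torus [0,1]^d likewise.\<close>

definition lattice :: "nat \<Rightarrow> (nat \<Rightarrow> int) set" where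
  "lattice d = ({..<d} \<rightarrow>\<^sub>E (UNIV :: int set))"

definition torus :: "nat \<Rightarrow> (nat \<Rightarrow> real) set" where
  "torus d = ({..<d} \<rightarrow>\<^sub>E {0..1::real})"

definition torus_measure :: "nat \<Rightarrow> (nat \<Rightarrow> real) measure" where
  "torus_measure d = PiM {..<d} (\<lambda>_. lebesgue_on {0..1::real})"

definition dotp :: "nat \<Rightarrow> (nat \<Rightarrow> int) \<Rightarrow> (nat \<Rightarrow> real) \<Rightarrow> real" where
  "dotp d k x = (\<Sum>j<d. real_of_int (k j) * x j)"

definition admissible :: "nat \<Rightarrow> ((nat \<Rightarrow> int) \<Rightarrow> real) \<Rightarrow> bool" where
  "admissible d \<omega> \<longleftrightarrow> (\<forall>k\<in>lattice d. \<omega> k > 0) \<and>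
     (\<lambda>k. 1 / (\<omega> k)\<^sup>2) summable_on lattice d"

text \<open>Elements of H^omega(T^d), represented by their Fourier coefficient families.\<close>
definition Hspace :: "((nat \<Rightarrow> int) \<Rightarrow> real) \<Rightarrow> nat \<Rightarrow> ((nat \<Rightarrow> int) \<Rightarrow> complex) set" where
  "Hspace \<omega> d = {a. (\<forall>k. k \<notin> lattice d \<longrightarrow> a k = 0) \<and>
     (\<lambda>k. (cmod (a k))\<^sup>2 * (\<omega> k)\<^sup>2) summable_on lattice d}"

definition Hnorm :: "((nat \<Rightarrow> int) \<Rightarrow> real) \<Rightarrow> nat \<Rightarrow> ((nat \<Rightarrow> int) \<Rightarrow> complex) \<Rightarrow> real" where
  "Hnorm \<omega> d a = sqrt (\<Sum>\<^sub>\<infinity>k\<in>lattice d. (cmod (a k))\<^sup>2 * (\<omega> k)\<^sup>2)"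

definition evalf :: "nat \<Rightarrow> ((nat \<Rightarrow> int) \<Rightarrow> complex) \<Rightarrow> (nat \<Rightarrow> real) \<Rightarrow> complex" where
  "evalf d a x = (\<Sum>\<^sub>\<infinity>k\<in>lattice d. a k * exp (2 * pi * \<i> * complex_of_real (dotp d k x)))"

definition Lambda_all :: "((nat \<Rightarrow> int) \<Rightarrow> real) \<Rightarrow> nat \<Rightarrow> (((nat \<Rightarrow> int) \<Rightarrow> complex) \<Rightarrow> complex) set" where
  "Lambda_all \<omega> d = {L. (\<forall>a\<in>Hspace \<omega> d. \<forall>b\<in>Hspace \<omega> d. L (\<lambda>k. a k + b k) = L a + L b) \<and>
     (\<forall>c. \<forall>a\<in>Hspace \<omega> d. L (\<lambda>k. c * a k) = c * L a) \<and>
     (\<exists>C. \<forall>a\<in>Hspace \<omega> d. cmod (L a) \<le> C * Hnorm \<omega> d a)}"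

definition Lambda_std :: "nat \<Rightarrow> (((nat \<Rightarrow> int) \<Rightarrow> complex) \<Rightarrow> complex) set" where
  "Lambda_std d = {(\<lambda>a. evalf d a x) | x. x \<in> torus d}"

definition alg_err :: "((nat \<Rightarrow> int) \<Rightarrow> real) \<Rightarrow> nat \<Rightarrow> (((nat \<Rightarrow> int) \<Rightarrow> complex) \<Rightarrow> complex) list
     \<Rightarrow> (complex list \<Rightarrow> (nat \<Rightarrow> real) \<Rightarrow> complex) \<Rightarrow> ereal" where
  "alg_err \<omega> d Ls \<phi> = (SUP a\<in>{a\<in>Hspace \<omega> d. Hnorm \<omega> d a \<le> 1}.
      esssup (torus_measure d) (\<lambda>x. ereal (cmod (evalf d a x - \<phi> (map (\<lambda>L. L a) Ls) x))))"

definition min_err :: "((nat \<Rightarrow> int) \<Rightarrow> real) \<Rightarrow> nat \<Rightarrow> (((nat \<Rightarrow> int) \<Rightarrow> complex) \<Rightarrow> complex) set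
     \<Rightarrow> nat \<Rightarrow> ereal" where
  "min_err \<omega> d \<Lambda> n = (INF p\<in>{(Ls, \<phi>). length Ls = n \<and> set Ls \<subseteq> \<Lambda> \<and>
        (\<forall>y. \<phi> y \<in> borel_measurable (torus_measure d)) \<and> (n = 0 \<longrightarrow> \<phi> = (\<lambda>_ _. 0))}.
      alg_err \<omega> d (fst p) (snd p))"

datatype setting = ABS | NOR

definition CRI :: "((nat \<Rightarrow> int) \<Rightarrow> real) \<Rightarrow> nat \<Rightarrow> setting \<Rightarrow> ereal" where
  "CRI \<omega> d s = (case s of ABS \<Rightarrow> 1 | NOR \<Rightarrow> min_err \<omega> d {} 0)"

text \<open>Information complexity (infinite if no n works).\<close>
definition info_compl :: "((nat \<Rightarrow> int) \<Rightarrow> real) \<Rightarrow> nat \<Rightarrow> (((nat \<Rightarrow> int) \<Rightarrow> complex) \<Rightarrow> complex) set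
     \<Rightarrow> setting \<Rightarrow> real \<Rightarrow> enat" where
  "info_compl \<omega> d \<Lambda> s \<epsilon> = (INF n\<in>{n. min_err \<omega> d \<Lambda> n \<le> ereal \<epsilon> * CRI \<omega> d s}. enat n)"

end

theory Submission
  imports Defs "HOL-Probability.Infinite_Product_Measure"
begin

text \<open>If \<open>m\<close> pieces of arbitrary linear information reach the error \<open>\<epsilon>/c\<^sub>2\<close>, the
  hypothesis yields \<open>c\<^sub>1 m\<close> function values reaching \<open>\<epsilon>\<close>, so even \<open>c\<^sub>1\<close> (rather than
  \<open>2 c\<^sub>1\<close>) is a valid factor. The hypothesis is only assumed for \<open>m \<ge> 1\<close>; for \<open>m = 0\<close>
  the initial error does not depend on the class of information, and errors are nonnegative
  because the torus carries a probability measure.\<close>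

lemma prob_space_torus_measure: "prob_space (torus_measure d)"
  unfolding torus_measure_def
proof (rule prob_space_PiM)
  show "prob_space (lebesgue_on {0..1::real})"
    by (rule prob_spaceI) (simp add: emeasure_restrict_space)
qed

lemma esssup_nonneg:
  fixes f :: "'a \<Rightarrow> ereal"
  assumes "emeasure M (space M) \<noteq> 0" and "\<And>x. 0 \<le> f x"
  shows "0 \<le> esssup M f"
proof -
  have "esssup M (\<lambda>_. 0) \<le> esssup M f"
    using assms(2) by (intro esssup_mono) auto
  then show ?thesis
    by (simp add: esssup_const[OF assms(1)])
qed

lemma zero_in_Hspace: "(\<lambda>_. 0) \<in> Hspace \<omega> d"
  by (simp add: Hspace_def)

lemma Hnorm_zero: "Hnorm \<omega> d (\<lambda>_. 0) = 0"
  by (simp add: Hnorm_def)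

lemma alg_err_nonneg: "0 \<le> alg_err \<omega> d Ls \<phi>"
proof -
  interpret prob_space "torus_measure d"
    by (rule prob_space_torus_measure)
  have "0 \<le> esssup (torus_measure d) (\<lambda>x. ereal (cmod (evalf d a x - \<phi> (map (\<lambda>L. L a) Ls) x)))"
    for a by (rule esssup_nonneg) (auto simp: emeasure_space_1)
  then show ?thesis
    unfolding alg_err_def using zero_in_Hspace Hnorm_zero
    by (intro SUP_upper2[of "\<lambda>_. 0"]) auto
qed

lemma min_err_nonneg: "0 \<le> min_err \<omega> d \<Lambda> n"
  unfolding min_err_def by (rule INF_greatest) (rule alg_err_nonneg)

lemma min_err_0: "min_err \<omega> d \<Lambda> 0 = alg_err \<omega> d [] (\<lambda>_ _. 0)"
proof -
  have "{(Ls, \<phi>). Ls = [] \<and> set Ls \<subseteq> \<Lambda> \<and>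
        (\<forall>y. \<phi> y \<in> borel_measurable (torus_measure d)) \<and> \<phi> = (\<lambda>_ _. 0)}
      = {([], \<lambda>(_::complex list) (_::nat \<Rightarrow> real). 0::complex)}"
    by auto
  then show ?thesis
    by (simp add: min_err_def)
qed

lemma info_compl_le:
  "min_err \<omega> d \<Lambda> n \<le> ereal \<epsilon> * CRI \<omega> d s \<Longrightarrow> info_compl \<omega> d \<Lambda> s \<epsilon> \<le> enat n"
  unfolding info_compl_def by (rule INF_lower) simp

lemma info_compl_attained:
  assumes "info_compl \<omega> d \<Lambda> s \<epsilon> = enat m"
  shows "min_err \<omega> d \<Lambda> m \<le> ereal \<epsilon> * CRI \<omega> d s"
proof -
  let ?S = "{n. min_err \<omega> d \<Lambda> n \<le> ereal \<epsilon> * CRI \<omega> d s}"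
  have "?S \<noteq> {}"
  proof
    assume "?S = {}"
    then have "info_compl \<omega> d \<Lambda> s \<epsilon> = \<infinity>"
      by (simp add: info_compl_def top_enat_def)
    with assms show False
      by simp
  qed
  then obtain k where "k \<in> ?S"
    by blast
  then have "info_compl \<omega> d \<Lambda> s \<epsilon> \<in> enat ` ?S"
    unfolding info_compl_def by (intro wellorder_InfI[of "enat k"]) auto
  with assms show ?thesis
    by auto
qed

lemma min_err_0_le_mult:
  assumes "1 \<le> c"
  shows "min_err \<omega> d \<Lambda> 0 \<le> ereal c * min_err \<omega> d \<Lambda>' 0"
proof -
  have "min_err \<omega> d \<Lambda> 0 = ereal 1 * min_err \<omega> d \<Lambda>' 0"
    by (simp add: min_err_0)
  also have "\<dots> \<le> ereal c * min_err \<omega> d \<Lambda>' 0"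
    using assms min_err_nonneg by (intro ereal_mult_right_mono) auto
  finally show ?thesis .
qed

theorem theorem2p3:
  fixes c1 c2 :: nat
  assumes "c1 \<ge> 1" and "c2 \<ge> 1"
    and hyp: "\<forall>d m \<omega>. d \<ge> 1 \<longrightarrow> m \<ge> 1 \<longrightarrow> admissible d \<omega> \<longrightarrow>
       min_err \<omega> d (Lambda_std d) (c1 * m) \<le> ereal (real c2) * min_err \<omega> d (Lambda_all \<omega> d) m"
  shows "\<forall>s d \<omega> \<epsilon>. d \<ge> 1 \<longrightarrow> admissible d \<omega> \<longrightarrow> 0 < \<epsilon> \<longrightarrow> \<epsilon> < 1 \<longrightarrow>
     info_compl \<omega> d (Lambda_std d) s \<epsilon>
       \<le> enat (2 * c1) * info_compl \<omega> d (Lambda_all \<omega> d) s (\<epsilon> / real c2)"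
proof (intro allI impI)
  fix s d \<omega> and \<epsilon> :: real
  assume "d \<ge> 1" and "admissible d \<omega>" and "0 < \<epsilon>" and "\<epsilon> < 1"
  show "info_compl \<omega> d (Lambda_std d) s \<epsilon>
       \<le> enat (2 * c1) * info_compl \<omega> d (Lambda_all \<omega> d) s (\<epsilon> / real c2)"
  proof (cases "info_compl \<omega> d (Lambda_all \<omega> d) s (\<epsilon> / real c2)")
    case (enat m)
    have "min_err \<omega> d (Lambda_std d) (c1 * m) \<le> ereal c2 * min_err \<omega> d (Lambda_all \<omega> d) m"
      using hyp \<open>d \<ge> 1\<close> \<open>admissible d \<omega>\<close> \<open>c2 \<ge> 1\<close> min_err_0_le_mult
      by (cases "m = 0") auto
    also have "\<dots> \<le> ereal c2 * (ereal (\<epsilon> / c2) * CRI \<omega> d s)"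
      using info_compl_attained[OF enat] by (intro ereal_mult_left_mono) auto
    also have "\<dots> = ereal \<epsilon> * CRI \<omega> d s"
      using \<open>c2 \<ge> 1\<close> by (simp add: mult.assoc[symmetric])
    finally have "info_compl \<omega> d (Lambda_std d) s \<epsilon> \<le> enat (c1 * m)"
      by (rule info_compl_le)
    also have "\<dots> \<le> enat (2 * c1) * info_compl \<omega> d (Lambda_all \<omega> d) s (\<epsilon> / real c2)"
      using enat by simp
    finally show ?thesis .
  next
    case infinity
    with \<open>c1 \<ge> 1\<close> show ?thesis
      by (simp add: imult_is_infinity)
  qed
qed

end
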